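(* Let $(E,C)$ be a separated graph with $E^0$ and $E^1$ countable (finite or countably infinite), and let $S\subseteq C_{fin}$. Then there exists an $(E,C,S)$-algebraic branching system $(\mathfrak{X},\{R_e\}_{e\in E^1},\{D_v\}_{v\in E^0},\{f_e\}_{e\in E^1})$ with $\mathfrak{X}\subseteq\mathbb{R}$ such that, for every non-sink $v\in E^0$: 1. $R_e\cap R_f\neq\emptyset$ for each $e\in X$, $f\in Y$, whenever $X,Y\in C_v$ with $X\neq Y$; 2. for each $X\in C_v\setminus S$, $\bigcup_{e\in X}R_e\subsetneq D_v$; 3. for $X,Y\in C_v\setminus S$ with $X\neq Y$, $\bigcup_{e\in X}R_e\neq\bigcup_{f\in Y}R_f$.
   Context: A separated graph is a pair $(E,C)$ where $E=(E^0,E^1,r,s)$ is a directed graph (vertex set $E^0$, edge set $E^1$, range and source maps $r,s:E^1\to E^0$) and $C=\bigcup_{v\in E^0}C_v$, where for each non-sink $v$ (i.e. $s^{-1}(v)\neq\emptyset$), $C_v$ is a partition of $s^{-1}(v)$ into pairwise disjoint nonempty sets. $C_{fin}$ denotes the set of all finite sets $Y\in C$. Given $(E,C)$ and $S\subseteq C_{fin}$, an $(E,C,S)$-algebraic branching system consists of a set $\mathfrak{X}$, families of subsets $\{R_e\}_{e\in E^1}$, $\{D_v\}_{v\in E^0}$ of $\mathfrak{X}$ and maps $f_e$ such that: (1) $R_e\cap R_d=\emptyset$ for $d,e\in Y$, $d\neq e$, $Y\in C$; (2) $D_u\cap D_v=\emptyset$ for $u\neq v$ in $E^0$; (3) $R_e\subseteq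 D_{s(e)}$ for each $e\in E^1$; (4) $D_v=\bigcup_{e\in Y}R_e$ whenever $Y\in S\cap C_v$, for each non-sink $v$; (5) for each $e\in E^1$, $f_e:D_{r(e)}\to R_e$ is a bijection. *)

theory Defs
  imports Complex_Main "HOL-Library.Countable_Set"
begin

text \<open>A directed graph E = (V, Ed, r, s) with vertex set V, edge set Ed,
  range map r and source map s (relevant only on Ed).\<close>

definition source_set :: "'e set \<Rightarrow> ('e \<Rightarrow> 'v) \<Rightarrow> 'v \<Rightarrow> 'e set" where
  "source_set Ed s v = {e \<in> Ed. s e = v}"

definition is_sink :: "'e set \<Rightarrow> ('e \<Rightarrow> 'v) \<Rightarrow> 'v \<Rightarrow> bool" where
  "is_sink Ed s v \<longleftrightarrow> source_set Ed s v = {}"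

definition separated_graph ::
  "'v set \<Rightarrow> 'e set \<Rightarrow> ('e \<Rightarrow> 'v) \<Rightarrow> ('e \<Rightarrow> 'v) \<Rightarrow> ('v \<Rightarrow> 'e set set) \<Rightarrow> bool" where
  "separated_graph V Ed r s C \<longleftrightarrow>
     (\<forall>e\<in>Ed. r e \<in> V \<and> s e \<in> V) \<and>
     (\<forall>v\<in>V. if is_sink Ed s v then C v = {}
             else (\<Union>(C v) = source_set Ed s v \<and>
                   (\<forall>X\<in>C v. X \<noteq> {}) \<and>
                   (\<forall>X\<in>C v. \<forall>Y\<in>C v. X \<noteq> Y \<longrightarrow> X \<inter> Y = {})))"

definition C_all :: "'v set \<Rightarrow> ('v \<Rightarrow> 'e set set) \<Rightarrow> 'e set set" where
  "C_all V C = (\<Union>v\<in>V. C v)"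

definition C_fin :: "'v set \<Rightarrow> ('v \<Rightarrow> 'e set set) \<Rightarrow> 'e set set" where
  "C_fin V C = {Y \<in> C_all V C. finite Y}"

definition algebraic_branching_system ::
  "'v set \<Rightarrow> 'e set \<Rightarrow> ('e \<Rightarrow> 'v) \<Rightarrow> ('e \<Rightarrow> 'v) \<Rightarrow> ('v \<Rightarrow> 'e set set) \<Rightarrow> 'e set set
   \<Rightarrow> 'x set \<Rightarrow> ('e \<Rightarrow> 'x set) \<Rightarrow> ('v \<Rightarrow> 'x set) \<Rightarrow> ('e \<Rightarrow> 'x \<Rightarrow> 'x) \<Rightarrow> bool" where
  "algebraic_branching_system V Ed r s C S Xs R D f \<longleftrightarrow>
     (\<forall>e\<in>Ed. R e \<subseteq> Xs) \<and> (\<forall>v\<in>V. D v \<subseteq> Xs) \<and>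
     (\<forall>Y\<in>C_all V C. \<forall>d\<in>Y. \<forall>e\<in>Y. d \<noteq> e \<longrightarrow> R e \<inter> R d = {}) \<and>
     (\<forall>u\<in>V. \<forall>v\<in>V. u \<noteq> v \<longrightarrow> D u \<inter> D v = {}) \<and>
     (\<forall>e\<in>Ed. R e \<subseteq> D (s e)) \<and>
     (\<forall>v\<in>V. \<not> is_sink Ed s v \<longrightarrow> (\<forall>Y\<in>S \<inter> C v. D v = (\<Union>e\<in>Y. R e))) \<and>
     (\<forall>e\<in>Ed. bij_betw (f e) (D (r e)) (R e))"

end

theory Submission
  imports Defs
begin

text \<open>Take as points of \<open>D v\<close> the triples \<open>(v, F, n)\<close>, where \<open>F\<close> is a finite set of edges out of
  \<open>v\<close> containing at most one edge of each block of \<open>C v\<close>, and \<open>n \<in> \<nat>\<close>. The range \<open>R e\<close> consists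
  of the points with \<open>e \<in> F\<close>, together with, if the block \<open>X\<close> of \<open>e\<close> lies in \<open>S\<close> and \<open>e\<close> is the
  designated edge of \<open>X\<close>, the points with \<open>F \<inter> X = {}\<close>. Two edges of one block never lie in a
  common \<open>F\<close>, so their ranges are disjoint, while edges of different blocks share the point
  \<open>(v, {e, g}, 0)\<close>. The point \<open>(v, {}, 0)\<close> is missed by the ranges of a block outside \<open>S\<close>, and
  \<open>(v, {e}, 0)\<close> separates the block of \<open>e\<close> from any other block outside \<open>S\<close>. Due to the
  counter \<open>n\<close> all these sets are countably infinite, so the maps \<open>f e\<close> can be taken to be
  bijections; finally everything is transported injectively into \<open>\<real>\<close>.\<close>

definition distinguishes_blocks ::
  "'v set \<Rightarrow> 'e set \<Rightarrow> ('e \<Rightarrow> 'v) \<Rightarrow> ('v \<Rightarrow> 'e set set) \<Rightarrow> 'e set set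
   \<Rightarrow> ('e \<Rightarrow> 'x set) \<Rightarrow> ('v \<Rightarrow> 'x set) \<Rightarrow> bool" where
  "distinguishes_blocks V Ed s C S R D \<longleftrightarrow>
     (\<forall>v\<in>V. \<not> is_sink Ed s v \<longrightarrow>
        (\<forall>X\<in>C v. \<forall>Y\<in>C v. X \<noteq> Y \<longrightarrow> (\<forall>e\<in>X. \<forall>g\<in>Y. R e \<inter> R g \<noteq> {})) \<and>
        (\<forall>X\<in>C v - S. (\<Union>e\<in>X. R e) \<subset> D v) \<and>
        (\<forall>X\<in>C v - S. \<forall>Y\<in>C v - S. X \<noteq> Y \<longrightarrow> (\<Union>e\<in>X. R e) \<noteq> (\<Union>g\<in>Y. R g)))"

lemma distinguishes_blocksI:
  assumes "\<And>v X Y e g. v \<in> V \<Longrightarrow> \<not> is_sink Ed s v \<Longrightarrow> X \<in> C v \<Longrightarrow> Y \<in> C v \<Longrightarrow> X \<noteq> Y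
      \<Longrightarrow> e \<in> X \<Longrightarrow> g \<in> Y \<Longrightarrow> R e \<inter> R g \<noteq> {}"
    and "\<And>v X. v \<in> V \<Longrightarrow> \<not> is_sink Ed s v \<Longrightarrow> X \<in> C v \<Longrightarrow> X \<notin> S \<Longrightarrow> (\<Union>e\<in>X. R e) \<subset> D v"
    and "\<And>v X Y. v \<in> V \<Longrightarrow> \<not> is_sink Ed s v \<Longrightarrow> X \<in> C v \<Longrightarrow> X \<notin> S \<Longrightarrow> Y \<in> C v \<Longrightarrow> Y \<notin> S
      \<Longrightarrow> X \<noteq> Y \<Longrightarrow> (\<Union>e\<in>X. R e) \<noteq> (\<Union>g\<in>Y. R g)"
  shows "distinguishes_blocks V Ed s C S R D"
  unfolding distinguishes_blocks_def using assms by simp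

lemma distinguishes_blocksD:
  assumes "distinguishes_blocks V Ed s C S R D" and "v \<in> V" and "\<not> is_sink Ed s v"
  shows "X \<in> C v \<Longrightarrow> Y \<in> C v \<Longrightarrow> X \<noteq> Y \<Longrightarrow> e \<in> X \<Longrightarrow> g \<in> Y \<Longrightarrow> R e \<inter> R g \<noteq> {}"
    and "X \<in> C v \<Longrightarrow> X \<notin> S \<Longrightarrow> (\<Union>e\<in>X. R e) \<subset> D v"
    and "X \<in> C v \<Longrightarrow> X \<notin> S \<Longrightarrow> Y \<in> C v \<Longrightarrow> Y \<notin> S \<Longrightarrow> X \<noteq> Y \<Longrightarrow> (\<Union>e\<in>X. R e) \<noteq> (\<Union>g\<in>Y. R g)"
  using assms unfolding distinguishes_blocks_def by simp_all

lemma algebraic_branching_systemD: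
  assumes "algebraic_branching_system V Ed r s C S Xs R D f"
  shows "e \<in> Ed \<Longrightarrow> R e \<subseteq> Xs" and "v \<in> V \<Longrightarrow> D v \<subseteq> Xs"
    and "Y \<in> C_all V C \<Longrightarrow> d \<in> Y \<Longrightarrow> e \<in> Y \<Longrightarrow> d \<noteq> e \<Longrightarrow> R e \<inter> R d = {}"
    and "u \<in> V \<Longrightarrow> v \<in> V \<Longrightarrow> u \<noteq> v \<Longrightarrow> D u \<inter> D v = {}"
    and "e \<in> Ed \<Longrightarrow> R e \<subseteq> D (s e)"
    and "v \<in> V \<Longrightarrow> \<not> is_sink Ed s v \<Longrightarrow> Y \<in> S \<Longrightarrow> Y \<in> C v \<Longrightarrow> D v = (\<Union>e\<in>Y. R e)"
    and "e \<in> Ed \<Longrightarrow> bij_betw (f e) (D (r e)) (R e)"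
  using assms unfolding algebraic_branching_system_def by simp_all

lemma algebraic_branching_systemI:
  assumes "\<And>e. e \<in> Ed \<Longrightarrow> R e \<subseteq> Xs" and "\<And>v. v \<in> V \<Longrightarrow> D v \<subseteq> Xs"
    and "\<And>Y d e. Y \<in> C_all V C \<Longrightarrow> d \<in> Y \<Longrightarrow> e \<in> Y \<Longrightarrow> d \<noteq> e \<Longrightarrow> R e \<inter> R d = {}"
    and "\<And>u v. u \<in> V \<Longrightarrow> v \<in> V \<Longrightarrow> u \<noteq> v \<Longrightarrow> D u \<inter> D v = {}"
    and "\<And>e. e \<in> Ed \<Longrightarrow> R e \<subseteq> D (s e)"
    and "\<And>v Y. v \<in> V \<Longrightarrow> \<not> is_sink Ed s v \<Longrightarrow> Y \<in> S \<Longrightarrow> Y \<in> C v \<Longrightarrow> D v = (\<Union>e\<in>Y. R e)"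
    and "\<And>e. e \<in> Ed \<Longrightarrow> bij_betw (f e) (D (r e)) (R e)"
  shows "algebraic_branching_system V Ed r s C S Xs R D f"
  unfolding algebraic_branching_system_def using assms by simp

context
  fixes V :: "'v set" and Ed :: "'e set" and r s :: "'e \<Rightarrow> 'v" and C :: "'v \<Rightarrow> 'e set set"
  assumes sg: "separated_graph V Ed r s C"
begin

lemma separated_graph_endpoints: "e \<in> Ed \<Longrightarrow> r e \<in> V \<and> s e \<in> V"
  using sg unfolding separated_graph_def by blast

lemma separated_graph_block_not_sink:
  assumes "v \<in> V" "X \<in> C v" shows "\<not> is_sink Ed s v"
  using sg assms unfolding separated_graph_def by (metis empty_iff)

lemma separated_graph_block_edge:
  assumes "v \<in> V" "X \<in> C v" "e \<in> X" shows "e \<in> Ed" "s e = v"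
proof -
  have "\<Union>(C v) = source_set Ed s v"
    using sg assms separated_graph_block_not_sink unfolding separated_graph_def by metis
  then show "e \<in> Ed" "s e = v" using assms unfolding source_set_def by blast+
qed

lemma separated_graph_block_unique:
  assumes "v \<in> V" "X \<in> C v" "Y \<in> C v" "e \<in> X" "e \<in> Y" shows "X = Y"
  using sg assms separated_graph_block_not_sink unfolding separated_graph_def by (metis disjoint_iff)

lemma separated_graph_block_nonempty:
  assumes "v \<in> V" "X \<in> C v" shows "X \<noteq> {}"
  using sg assms separated_graph_block_not_sink unfolding separated_graph_def by metis

lemma C_all_subset_edges: "Y \<in> C_all V C \<Longrightarrow> Y \<subseteq> Ed"
  unfolding C_all_def using separated_graph_block_edge by blast

end

lemma bij_betw_conj_inj_on:
  assumes "inj_on h X" "A \<subseteq> X" "B \<subseteq> X" "bij_betw f A B"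
  shows "bij_betw (h \<circ> f \<circ> inv_into X h) (h ` A) (h ` B)"
proof -
  have "bij_betw (inv_into X h) (h ` A) A"
    using bij_betw_inv_into_subset[OF inj_on_imp_bij_betw[OF assms(1)] assms(2)] by simp
  moreover have "bij_betw h B (h ` B)"
    using inj_on_subset[OF assms(1,3)] by (rule inj_on_imp_bij_betw)
  ultimately show ?thesis using assms(4) by (metis bij_betw_trans comp_assoc)
qed

lemma algebraic_branching_system_image:
  assumes sg: "separated_graph V Ed r s C" and h: "inj_on h Xs"
    and abs: "algebraic_branching_system V Ed r s C S Xs R D f"
  shows "algebraic_branching_system V Ed r s C S (h ` Xs) (\<lambda>e. h ` R e) (\<lambda>v. h ` D v)
           (\<lambda>e. h \<circ> f e \<circ> inv_into Xs h)"
proof (rule algebraic_branching_systemI)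
  note RX = algebraic_branching_systemD(1)[OF abs] and DX = algebraic_branching_systemD(2)[OF abs]
  have image_Int: "h ` A \<inter> h ` B = h ` (A \<inter> B)" if "A \<subseteq> Xs" "B \<subseteq> Xs" for A B
    using inj_on_image_Int[OF h that] by (rule sym)
  show "h ` R e \<subseteq> h ` Xs" if "e \<in> Ed" for e
    using RX[OF that] by (rule image_mono)
  show "h ` D v \<subseteq> h ` Xs" if "v \<in> V" for v
    using DX[OF that] by (rule image_mono)
  show "h ` R e \<inter> h ` R d = {}" if Y: "Y \<in> C_all V C" and "d \<in> Y" "e \<in> Y" "d \<noteq> e" for Y d e
  proof -
    have "d \<in> Ed" "e \<in> Ed" using C_all_subset_edges[OF sg Y] that by blast+
    then show ?thesis
      using image_Int[OF RX RX] algebraic_branching_systemD(3)[OF abs that] by simp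
  qed
  show "h ` D u \<inter> h ` D v = {}" if "u \<in> V" "v \<in> V" "u \<noteq> v" for u v
    using image_Int[OF DX DX] algebraic_branching_systemD(4)[OF abs that] that by simp
  show "h ` R e \<subseteq> h ` D (s e)" if "e \<in> Ed" for e
    using algebraic_branching_systemD(5)[OF abs that] by (rule image_mono)
  show "h ` D v = (\<Union>e\<in>Y. h ` R e)" if "v \<in> V" "\<not> is_sink Ed s v" "Y \<in> S" "Y \<in> C v" for v Y
    using algebraic_branching_systemD(6)[OF abs that] by (simp add: image_UN)
  show "bij_betw (h \<circ> f e \<circ> inv_into Xs h) (h ` D (r e)) (h ` R e)" if e: "e \<in> Ed" for e
    using bij_betw_conj_inj_on[OF h DX RX[OF e] algebraic_branching_systemD(7)[OF abs e]]
      separated_graph_endpoints[OF sg e] by blast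
qed

lemma distinguishes_blocks_image:
  assumes sg: "separated_graph V Ed r s C" and h: "inj_on h Xs"
    and RX: "\<And>e. e \<in> Ed \<Longrightarrow> R e \<subseteq> Xs" and DX: "\<And>v. v \<in> V \<Longrightarrow> D v \<subseteq> Xs"
    and dist: "distinguishes_blocks V Ed s C S R D"
  shows "distinguishes_blocks V Ed s C S (\<lambda>e. h ` R e) (\<lambda>v. h ` D v)"
proof (rule distinguishes_blocksI)
  fix v assume v: "v \<in> V" and ns: "\<not> is_sink Ed s v"
  note dist_v = distinguishes_blocksD[OF dist v ns]
  have edge_RX: "R e \<subseteq> Xs" if "X \<in> C v" "e \<in> X" for X e
    using RX separated_graph_block_edge[OF sg v that] by blast
  have block_RX: "(\<Union>e\<in>X. R e) \<subseteq> Xs" if "X \<in> C v" for X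
    using edge_RX[OF that] by blast
  have image_eq_iff: "h ` A = h ` B \<longleftrightarrow> A = B" if "A \<subseteq> Xs" "B \<subseteq> Xs" for A B
    using inj_on_image_eq_iff[OF h that] .
  show "h ` R e \<inter> h ` R g \<noteq> {}"
    if X: "X \<in> C v" and Y: "Y \<in> C v" and "X \<noteq> Y" and e: "e \<in> X" and g: "g \<in> Y" for X Y e g
    using inj_on_image_Int[OF h edge_RX[OF X e] edge_RX[OF Y g]] dist_v(1)[OF that]
    by (metis image_is_empty)
  show "(\<Union>e\<in>X. h ` R e) \<subset> h ` D v" if "X \<in> C v" "X \<notin> S" for X
  proof -
    have "(\<Union>e\<in>X. R e) \<subset> D v" by (rule dist_v(2)[OF that])
    then have "h ` (\<Union>e\<in>X. R e) \<subset> h ` D v"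
      unfolding psubset_eq using image_eq_iff[OF block_RX[OF \<open>X \<in> C v\<close>] DX[OF v]] image_mono by metis
    then show ?thesis by (simp add: image_UN)
  qed
  show "(\<Union>e\<in>X. h ` R e) \<noteq> (\<Union>g\<in>Y. h ` R g)"
    if "X \<in> C v" "X \<notin> S" "Y \<in> C v" "Y \<notin> S" "X \<noteq> Y" for X Y
    using image_eq_iff[OF block_RX[OF \<open>X \<in> C v\<close>] block_RX[OF \<open>Y \<in> C v\<close>]] dist_v(3)[OF that]
    by (simp add: image_UN)
qed

lemma real_branching_system_from_countable:
  fixes Xs :: "'x set"
  assumes sg: "separated_graph V Ed r s C" and "countable Xs"
    and abs: "algebraic_branching_system V Ed r s C S Xs R D f"
    and dist: "distinguishes_blocks V Ed s C S R D"
  shows "\<exists>(Xs' :: real set) R' D' f'.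
           algebraic_branching_system V Ed r s C S Xs' R' D' f' \<and> distinguishes_blocks V Ed s C S R' D'"
proof -
  define h where "h x = real (to_nat_on Xs x)" for x
  have h: "inj_on h Xs"
    unfolding h_def using inj_on_to_nat_on[OF \<open>countable Xs\<close>] by (simp add: inj_on_def)
  show ?thesis
    using algebraic_branching_system_image[OF sg h abs]
      distinguishes_blocks_image[OF sg h algebraic_branching_systemD(1,2)[OF abs] dist] by blast
qed

definition branch_domain ::
  "'e set \<Rightarrow> ('e \<Rightarrow> 'v) \<Rightarrow> ('v \<Rightarrow> 'e set set) \<Rightarrow> 'v \<Rightarrow> ('v \<times> 'e set \<times> nat) set" where
  "branch_domain Ed s C v =
     {(w, F, n). w = v \<and> finite F \<and> F \<subseteq> source_set Ed s v \<and>
        (\<forall>X\<in>C v. \<forall>a\<in>F \<inter> X. \<forall>b\<in>F \<inter> X. a = b)}"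

definition branch_range ::
  "'e set \<Rightarrow> ('e \<Rightarrow> 'v) \<Rightarrow> ('v \<Rightarrow> 'e set set) \<Rightarrow> 'e set set \<Rightarrow> 'e \<Rightarrow> ('v \<times> 'e set \<times> nat) set" where
  "branch_range Ed s C S e =
     {(w, F, n) \<in> branch_domain Ed s C (s e). e \<in> F \<or>
        (\<exists>X\<in>C (s e) \<inter> S. e \<in> X \<and> F \<inter> X = {} \<and> e = (SOME x. x \<in> X))}"

definition branch_map ::
  "'e set \<Rightarrow> ('e \<Rightarrow> 'v) \<Rightarrow> ('e \<Rightarrow> 'v) \<Rightarrow> ('v \<Rightarrow> 'e set set) \<Rightarrow> 'e set set \<Rightarrow> 'e
   \<Rightarrow> 'v \<times> 'e set \<times> nat \<Rightarrow> 'v \<times> 'e set \<times> nat" where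
  "branch_map Ed r s C S e =
     from_nat_into (branch_range Ed s C S e) \<circ> to_nat_on (branch_domain Ed s C (r e))"

lemma branch_domain_memI:
  assumes "finite F" "F \<subseteq> source_set Ed s v" "\<forall>X\<in>C v. \<forall>a\<in>F \<inter> X. \<forall>b\<in>F \<inter> X. a = b"
  shows "(v, F, n) \<in> branch_domain Ed s C v"
  using assms unfolding branch_domain_def by simp

lemma branch_range_memI:
  assumes "s e = v" "(v, F, n) \<in> branch_domain Ed s C v" "e \<in> F"
  shows "(v, F, n) \<in> branch_range Ed s C S e"
  using assms unfolding branch_range_def by simp

lemma branch_range_subset: "branch_range Ed s C S e \<subseteq> branch_domain Ed s C (s e)"
  unfolding branch_range_def by auto

lemma countable_branch_domain:
  assumes "countable Ed" shows "countable (branch_domain Ed s C v)"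
proof (rule countable_subset)
  show "branch_domain Ed s C v \<subseteq> {v} \<times> {F. finite F \<and> F \<subseteq> Ed} \<times> UNIV"
    unfolding branch_domain_def source_set_def by auto
  show "countable ({v} \<times> {F. finite F \<and> F \<subseteq> Ed} \<times> (UNIV :: nat set))"
    using countable_Collect_finite_subset[OF assms] by simp
qed

lemma infinite_branch_domain: "infinite (branch_domain Ed s C v)"
proof (rule infinite_super)
  show "range (\<lambda>n::nat. (v, {}, n)) \<subseteq> branch_domain Ed s C v"
    unfolding branch_domain_def by auto
  show "infinite (range (\<lambda>n::nat. (v, {}, n)))"
    by (rule range_inj_infinite) (simp add: inj_def)
qed

lemma infinite_branch_range:
  assumes "e \<in> Ed" shows "infinite (branch_range Ed s C S e)"
proof (rule infinite_super)
  show "range (\<lambda>n::nat. (s e, {e}, n)) \<subseteq> branch_range Ed s C S e"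
    using assms unfolding branch_range_def branch_domain_def source_set_def by auto
  show "infinite (range (\<lambda>n::nat. (s e, {e}, n)))"
    by (rule range_inj_infinite) (simp add: inj_def)
qed

lemma bij_betw_branch_map:
  assumes "countable Ed" and "e \<in> Ed"
  shows "bij_betw (branch_map Ed r s C S e) (branch_domain Ed s C (r e)) (branch_range Ed s C S e)"
  unfolding branch_map_def
proof (rule bij_betw_trans)
  show "bij_betw (to_nat_on (branch_domain Ed s C (r e))) (branch_domain Ed s C (r e)) UNIV"
    using countable_branch_domain[OF assms(1)] infinite_branch_domain by (rule to_nat_on_infinite)
  have "countable (branch_range Ed s C S e)"
    by (rule countable_subset[OF branch_range_subset countable_branch_domain[OF assms(1)]])
  then show "bij_betw (from_nat_into (branch_range Ed s C S e)) UNIV (branch_range Ed s C S e)"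
    using infinite_branch_range[OF assms(2)] by (rule bij_betw_from_nat_into)
qed

context
  fixes V :: "'v set" and Ed :: "'e set" and r s :: "'e \<Rightarrow> 'v" and C :: "'v \<Rightarrow> 'e set set"
    and S :: "'e set set"
  assumes sg: "separated_graph V Ed r s C"
begin

lemma branch_range_memD:
  assumes "v \<in> V" "Y \<in> C v" "e \<in> Y" and p: "(w, F, n) \<in> branch_range Ed s C S e"
  shows "\<forall>a\<in>F \<inter> Y. \<forall>b\<in>F \<inter> Y. a = b"
    and "e \<in> F \<or> (Y \<in> S \<and> F \<inter> Y = {} \<and> e = (SOME x. x \<in> Y))"
proof -
  have se: "s e = v" using separated_graph_block_edge[OF sg assms(1-3)] by simp
  then show "\<forall>a\<in>F \<inter> Y. \<forall>b\<in>F \<inter> Y. a = b"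
    using p assms(2) unfolding branch_range_def branch_domain_def by auto
  have "X = Y" if "X \<in> C v" "e \<in> X" for X
    using separated_graph_block_unique[OF sg assms(1) that(1) assms(2) that(2) assms(3)] .
  then show "e \<in> F \<or> (Y \<in> S \<and> F \<inter> Y = {} \<and> e = (SOME x. x \<in> Y))"
    using p se unfolding branch_range_def by auto
qed

lemma branch_range_disjoint:
  assumes "v \<in> V" "Y \<in> C v" "d \<in> Y" "e \<in> Y" "d \<noteq> e"
  shows "branch_range Ed s C S e \<inter> branch_range Ed s C S d = {}"
proof (rule ccontr)
  assume "branch_range Ed s C S e \<inter> branch_range Ed s C S d \<noteq> {}"
  then obtain w F n where
    pe: "(w, F, n) \<in> branch_range Ed s C S e" and pd: "(w, F, n) \<in> branch_range Ed s C S d"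
    by auto
  note e_mem = branch_range_memD[OF assms(1,2,4) pe] and d_mem = branch_range_memD[OF assms(1,2,3) pd]
  show False using e_mem d_mem(2) assms(3-5) by blast
qed

lemma branch_domain_eq_UN_branch_range:
  assumes v: "v \<in> V" and Y: "Y \<in> S" "Y \<in> C v"
  shows "branch_domain Ed s C v = (\<Union>e\<in>Y. branch_range Ed s C S e)"
proof
  have se: "s e = v" if "e \<in> Y" for e
    using separated_graph_block_edge(2)[OF sg v Y(2) that] .
  then show "(\<Union>e\<in>Y. branch_range Ed s C S e) \<subseteq> branch_domain Ed s C v"
    using branch_range_subset by fastforce
  show "branch_domain Ed s C v \<subseteq> (\<Union>e\<in>Y. branch_range Ed s C S e)"
  proof
    fix p assume p: "p \<in> branch_domain Ed s C v"
    then obtain F n where pF: "p = (v, F, n)" unfolding branch_domain_def by auto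
    show "p \<in> (\<Union>e\<in>Y. branch_range Ed s C S e)"
    proof (cases "F \<inter> Y = {}")
      case True
      define e where "e = (SOME x. x \<in> Y)"
      have "e \<in> Y"
        unfolding e_def using separated_graph_block_nonempty[OF sg v Y(2)] by (simp add: some_in_eq)
      moreover have "p \<in> branch_range Ed s C S e"
        using p pF True Y se[OF \<open>e \<in> Y\<close>] \<open>e \<in> Y\<close> unfolding branch_range_def e_def by auto
      ultimately show ?thesis by blast
    next
      case False
      then obtain e where "e \<in> F" "e \<in> Y" by blast
      then have "p \<in> branch_range Ed s C S e"
        using branch_range_memI[of s e, OF se] p pF by simp
      then show ?thesis using \<open>e \<in> Y\<close> by blast
    qed
  qed
qed

lemma branch_range_Int_different_blocks:
  assumes v: "v \<in> V" and X: "X \<in> C v" and Y: "Y \<in> C v" and "X \<noteq> Y" and e: "e \<in> X" and g: "g \<in> Y"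
  shows "(v, {e, g}, 0) \<in> branch_range Ed s C S e \<inter> branch_range Ed s C S g"
proof -
  note e_edge = separated_graph_block_edge[OF sg v X e] and g_edge = separated_graph_block_edge[OF sg v Y g]
  have one_per_block: "\<forall>Z\<in>C v. \<forall>a\<in>{e, g} \<inter> Z. \<forall>b\<in>{e, g} \<inter> Z. a = b"
  proof (intro ballI)
    fix Z a b assume Z: "Z \<in> C v" and "a \<in> {e, g} \<inter> Z" "b \<in> {e, g} \<inter> Z"
    show "a = b"
    proof (rule ccontr)
      assume "a \<noteq> b"
      then have "e \<in> Z" "g \<in> Z" using \<open>a \<in> _\<close> \<open>b \<in> _\<close> by auto
      then show False
        using separated_graph_block_unique[OF sg v Z X _ e] separated_graph_block_unique[OF sg v Z Y _ g]
          \<open>X \<noteq> Y\<close> by simp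
    qed
  qed
  moreover have "{e, g} \<subseteq> source_set Ed s v"
    using e_edge g_edge unfolding source_set_def by simp
  ultimately have dom: "(v, {e, g}, 0) \<in> branch_domain Ed s C v"
    using branch_domain_memI[of "{e, g}" Ed s v C] by blast
  have "(v, {e, g}, 0) \<in> branch_range Ed s C S e"
    by (rule branch_range_memI[of s e, OF e_edge(2) dom]) simp
  moreover have "(v, {e, g}, 0) \<in> branch_range Ed s C S g"
    by (rule branch_range_memI[of s g, OF g_edge(2) dom]) simp
  ultimately show ?thesis by blast
qed

lemma empty_choice_notin_branch_range:
  assumes "v \<in> V" "X \<in> C v" "X \<notin> S" "e \<in> X"
  shows "(v, {}, n) \<notin> branch_range Ed s C S e"
  using branch_range_memD(2)[OF assms(1,2,4)] assms(3) by blast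

lemma singleton_choice_notin_branch_range:
  assumes v: "v \<in> V" and X: "X \<in> C v" and Y: "Y \<in> C v" "Y \<notin> S" and "X \<noteq> Y" and e: "e \<in> X" and g: "g \<in> Y"
  shows "(v, {e}, n) \<notin> branch_range Ed s C S g"
proof
  assume "(v, {e}, n) \<in> branch_range Ed s C S g"
  then have "g = e" using branch_range_memD(2)[OF v Y(1) g] Y(2) by blast
  then show False using separated_graph_block_unique[OF sg v X Y(1) e] g \<open>X \<noteq> Y\<close> by simp
qed

lemma algebraic_branching_system_branch:
  assumes "countable Ed"
  shows "algebraic_branching_system V Ed r s C S (\<Union>v\<in>V. branch_domain Ed s C v)
           (branch_range Ed s C S) (branch_domain Ed s C) (branch_map Ed r s C S)"
proof (rule algebraic_branching_systemI)
  show "branch_range Ed s C S e \<subseteq> (\<Union>v\<in>V. branch_domain Ed s C v)" if "e \<in> Ed" for e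
    using branch_range_subset[of Ed s C S e] separated_graph_endpoints[OF sg that] by blast
  show "branch_domain Ed s C v \<subseteq> (\<Union>v\<in>V. branch_domain Ed s C v)" if "v \<in> V" for v
    using that by blast
  show "branch_range Ed s C S e \<inter> branch_range Ed s C S d = {}"
    if "Y \<in> C_all V C" "d \<in> Y" "e \<in> Y" "d \<noteq> e" for Y d e
  proof -
    obtain v where "v \<in> V" "Y \<in> C v" using \<open>Y \<in> C_all V C\<close> unfolding C_all_def by blast
    then show ?thesis using that(2-4) by (rule branch_range_disjoint)
  qed
  show "branch_domain Ed s C u \<inter> branch_domain Ed s C v = {}" if "u \<noteq> v" for u v
    using that unfolding branch_domain_def by auto
  show "branch_range Ed s C S e \<subseteq> branch_domain Ed s C (s e)" for e
    by (rule branch_range_subset)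
  show "branch_domain Ed s C v = (\<Union>e\<in>Y. branch_range Ed s C S e)"
    if "v \<in> V" "Y \<in> S" "Y \<in> C v" for v Y
    using that by (rule branch_domain_eq_UN_branch_range)
  show "bij_betw (branch_map Ed r s C S e) (branch_domain Ed s C (r e)) (branch_range Ed s C S e)"
    if "e \<in> Ed" for e
    using assms that by (rule bij_betw_branch_map)
qed

lemma distinguishes_blocks_branch:
  "distinguishes_blocks V Ed s C S (branch_range Ed s C S) (branch_domain Ed s C)"
proof (rule distinguishes_blocksI)
  show "branch_range Ed s C S e \<inter> branch_range Ed s C S g \<noteq> {}"
    if "v \<in> V" "X \<in> C v" "Y \<in> C v" "X \<noteq> Y" "e \<in> X" "g \<in> Y" for v X Y e g
    using branch_range_Int_different_blocks[OF that] by blast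
  show "(\<Union>e\<in>X. branch_range Ed s C S e) \<subset> branch_domain Ed s C v"
    if v: "v \<in> V" and X: "X \<in> C v" "X \<notin> S" for v X
  proof -
    have "(\<Union>e\<in>X. branch_range Ed s C S e) \<subseteq> branch_domain Ed s C v"
      using branch_range_subset separated_graph_block_edge(2)[OF sg v X(1)] by fastforce
    moreover have "(v, {}, 0) \<in> branch_domain Ed s C v"
      unfolding branch_domain_def by simp
    moreover have "(v, {}, 0) \<notin> (\<Union>e\<in>X. branch_range Ed s C S e)"
      using empty_choice_notin_branch_range[OF v X] by blast
    ultimately show ?thesis by blast
  qed
  show "(\<Union>e\<in>X. branch_range Ed s C S e) \<noteq> (\<Union>g\<in>Y. branch_range Ed s C S g)"
    if v: "v \<in> V" and X: "X \<in> C v" and Y: "Y \<in> C v" "Y \<notin> S" and "X \<noteq> Y" for v X Y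
  proof -
    obtain e where e: "e \<in> X" using separated_graph_block_nonempty[OF sg v X] by blast
    note e_edge = separated_graph_block_edge[OF sg v X e]
    have "{e} \<subseteq> source_set Ed s v" "\<forall>Z\<in>C v. \<forall>a\<in>{e} \<inter> Z. \<forall>b\<in>{e} \<inter> Z. a = b"
      using e_edge unfolding source_set_def by auto
    then have "(v, {e}, 0) \<in> branch_domain Ed s C v"
      using branch_domain_memI[of "{e}" Ed s v C] by blast
    then have "(v, {e}, 0) \<in> branch_range Ed s C S e"
      by (rule branch_range_memI[of s e, OF e_edge(2)]) simp
    moreover have "(v, {e}, 0) \<notin> (\<Union>g\<in>Y. branch_range Ed s C S g)"
      using singleton_choice_notin_branch_range[OF v X Y \<open>X \<noteq> Y\<close> e] by blast
    ultimately show ?thesis using e by blast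
  qed
qed

end

theorem theorem3p1:
  fixes V :: "'v set" and Ed :: "'e set" and r s :: "'e \<Rightarrow> 'v"
    and C :: "'v \<Rightarrow> 'e set set" and S :: "'e set set"
  assumes "separated_graph V Ed r s C"
    and "countable V" and "countable Ed"
    and "S \<subseteq> C_fin V C"
  shows "\<exists>(Xs :: real set) R D f.
           algebraic_branching_system V Ed r s C S Xs R D f \<and>
           (\<forall>v\<in>V. \<not> is_sink Ed s v \<longrightarrow>
              (\<forall>X\<in>C v. \<forall>Y\<in>C v. X \<noteq> Y \<longrightarrow>
                 (\<forall>e\<in>X. \<forall>g\<in>Y. R e \<inter> R g \<noteq> {})) \<and>
              (\<forall>X\<in>C v - S. (\<Union>e\<in>X. R e) \<subset> D v) \<and>
              (\<forall>X\<in>C v - S. \<forall>Y\<in>C v - S. X \<noteq> Y \<longrightarrow>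
                 (\<Union>e\<in>X. R e) \<noteq> (\<Union>g\<in>Y. R g)))"
proof -
  have "countable (\<Union>v\<in>V. branch_domain Ed s C v)"
    using assms(2) countable_branch_domain[OF assms(3)] by (rule countable_UN)
  from real_branching_system_from_countable[OF assms(1) this
      algebraic_branching_system_branch[OF assms(1,3)] distinguishes_blocks_branch[OF assms(1)]]
  show ?thesis unfolding distinguishes_blocks_def .
qed

end
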